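(* Assume the standing setup below. Let $\theta\in\mathbb{R}^{|\mathcal{V}|}$ with $\theta_i\ge0$ for all $i$, let $\mathbf{x}\in\mathcal{S}_\rho$, and let $(i,j)\in\mathcal{A}$ satisfy $u_i(\theta_i)\ge u_j(0)$. If $\mathbf{x}_i\in[0,\theta_i]$, then $\delta_{ij}(\mathbf{x})=0$ both for SSD and for NBRD. If moreover $\mathbf{z}^*_i(\mathbf{x})\in[0,\theta_i]$, where $\mathbf{z}^*(\mathbf{x})$ is the (unique) $\mathbf{z}$-part of any optimizer of $\mathbf{P}_3$, then $\mathbf{d}^*_{ij}=0$ for every optimizer $(\mathbf{z}^*,\mathbf{d}^* )$ of $\mathbf{P}_3$ (i.e. $\delta_{ij}(\mathbf{x})=0$ for NRPM as well).
   Context: Standing setup: $\mathcal{G}=(\mathcal{V},\mathcal{E})$ is a finite, connected, undirected graph; $\mathcal{N}^i$ is the neighbour set of $i$ and $\overline{\mathcal{N}}^i=\mathcal{N}^i\cup\{i\}$; $\mathcal{A}=\bigcup_{\{i,j\}\in\mathcal{E}}\{(i,j),(j,i)\}$ is the associated arc set. For $\rho\ge0$, $\mathcal{S}_\rho=\{\mathbf{x}\ge0:\sum_i\mathbf{x}_i=\rho\}$. For each node $i$, $p_i:[0,\infty)\to\mathbb{R}$ is twice continuously differentiable and strictly concave, and $u_i:=p_i'$ (right derivative at $0$), strictly decreasing. $U(\mathbf{x})=\sum_i[p_i(\mathbf{x}_i)-p_i(0)]$. All three dynamics have the form $\dot{\mathbf{x}}_i=\sum_{j\in\mathcal{N}^i}(\delta_{ji}(\mathbf{x})-\delta_{ij}(\mathbf{x}))$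 with flows $\delta_{ij}\ge0$ on arcs $(i,j)\in\mathcal{A}$. SSD (stratified Smith dynamics): $\delta_{ij}=\max\{u_j(\mathbf{x}_j)(\mathbf{x}_i-y_{ij})-(p_i(\mathbf{x}_i)-p_i(y_{ij})),0\}$, where $y_{ij}=0$ if $u_j(\mathbf{x}_j)\ge u_i(0)$, $y_{ij}=\mathbf{x}_i$ if $u_j(\mathbf{x}_j)\le u_i(\mathbf{x}_i)$, and otherwise $y_{ij}$ is the unique $y\in(0,\mathbf{x}_i)$ with $u_i(y)=u_j(\mathbf{x}_j)$. NBRD (nodal best response dynamics): $\delta_{ij}=\mathbf{d}^*_{ij}$, where $\{\mathbf{d}^*_{ij}\}_{j\in\overline{\mathcal{N}}^i}$ is the optimizer of $\mathbf{P}_2^i$: maximize $\sum_{j\in\mathcal{N}^i}[p_j(\mathbf{x}_j+\mathbf{d}_{ij})-p_j(\mathbf{x}_j)]+[p_i(\mathbf{d}_{ii})-p_i(0)]$ subject to $\mathbf{d}_{ii}+\sum_{j\in\mathcal{N}^i}\mathbf{d}_{ij}=\mathbf{x}_i$, $\mathbf{d}_{ij}\ge0$ for $j\in\overline{\mathcal{N}}^i$. NRPM (network restricted payoff maximization): $\mathbf{P}_3$ is: maximize $U(\mathbf{z})$ over $(\mathbf{z},\mathbf{d})$ subject to $\mathbf{z}_i=\mathbf{x}_i+\sum_{j\in\overline{\mathcal{N}}^i}(\mathbf{d}_{ji}-\mathbf{d}_{ij})$ for all $i$, $\sum_{j\in\overline{\mathcal{N}}^i}\mathbf{d}_{ij}=\mathbf{x}_i$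 for all $i$, and $\mathbf{d}_{ij}\ge0$ for all $(i,j)\in\mathcal{A}\cup\{(i,i):i\in\mathcal{V}\}$. The $\mathbf{z}$-component $\mathbf{z}^*(\mathbf{x})$ of optimizers is unique, the NRPM dynamics is $\dot{\mathbf{x}}=\mathbf{z}^*(\mathbf{x})-\mathbf{x}$, and its arc flows are $\delta_{ij}=\mathbf{d}^*_{ij}$ for an optimizer $(\mathbf{z}^*,\mathbf{d}^* )$. *)

theory Defs
  imports "HOL-Analysis.Analysis"
begin

definition strictly_concave_on :: "real set \<Rightarrow> (real \<Rightarrow> real) \<Rightarrow> bool" where
  "strictly_concave_on S f \<longleftrightarrow> convex S \<and>
     (\<forall>x\<in>S. \<forall>y\<in>S. \<forall>t::real. x \<noteq> y \<and> 0 < t \<and> t < 1 \<longrightarrow>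
        f ((1 - t) * x + t * y) > (1 - t) * f x + t * f y)"

definition graph_ok :: "('v::finite \<Rightarrow> 'v \<Rightarrow> bool) \<Rightarrow> bool" where
  "graph_ok E \<longleftrightarrow> (\<forall>a b. E a b \<longrightarrow> E b a) \<and> (\<forall>a. \<not> E a a) \<and> (\<forall>a b. E\<^sup>*\<^sup>* a b)"

definition nbr :: "('v \<Rightarrow> 'v \<Rightarrow> bool) \<Rightarrow> 'v \<Rightarrow> 'v set" where
  "nbr E i = {j. E i j}"

definition cnbr :: "('v \<Rightarrow> 'v \<Rightarrow> bool) \<Rightarrow> 'v \<Rightarrow> 'v set" where
  "cnbr E i = insert i (nbr E i)"

definition arcs :: "('v \<Rightarrow> 'v \<Rightarrow> bool) \<Rightarrow> ('v \<times> 'v) set" where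
  "arcs E = {(i, j). E i j}"

(* Standing payoff assumptions: each p_i is C^2 on [0,\<infinity>) and strictly concave,
   u_i = p_i' (one-sided derivative at 0). *)
definition payoff_ok :: "('v \<Rightarrow> real \<Rightarrow> real) \<Rightarrow> ('v \<Rightarrow> real \<Rightarrow> real) \<Rightarrow> bool" where
  "payoff_ok p u \<longleftrightarrow> (\<forall>i.
      (\<forall>x\<ge>0. (p i has_real_derivative u i x) (at x within {0..})) \<and>
      (\<exists>u'. (\<forall>x\<ge>0. (u i has_real_derivative u' x) (at x within {0..})) \<and>
            continuous_on {0..} u') \<and>
      strictly_concave_on {0..} (p i))"

definition S_rho :: "real \<Rightarrow> ('v::finite \<Rightarrow> real) set" where
  "S_rho \<rho> = {x. (\<forall>i. x i \<ge> 0) \<and> (\<Sum>i\<in>UNIV. x i) = \<rho>}"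

definition U :: "('v::finite \<Rightarrow> real \<Rightarrow> real) \<Rightarrow> ('v \<Rightarrow> real) \<Rightarrow> real" where
  "U p z = (\<Sum>i\<in>UNIV. p i (z i) - p i 0)"

definition ssd_y :: "('v \<Rightarrow> real \<Rightarrow> real) \<Rightarrow> 'v \<Rightarrow> 'v \<Rightarrow> ('v \<Rightarrow> real) \<Rightarrow> real" where
  "ssd_y u i j x =
     (if u j (x j) \<ge> u i 0 then 0
      else if u j (x j) \<le> u i (x i) then x i
      else (THE y. 0 < y \<and> y < x i \<and> u i y = u j (x j)))"

definition ssd_flow :: "('v \<Rightarrow> real \<Rightarrow> real) \<Rightarrow> ('v \<Rightarrow> real \<Rightarrow> real) \<Rightarrow> 'v \<Rightarrow> 'v \<Rightarrow> ('v \<Rightarrow> real) \<Rightarrow> real" where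
  "ssd_flow p u i j x =
     max (u j (x j) * (x i - ssd_y u i j x) - (p i (x i) - p i (ssd_y u i j x))) 0"

(* NBRD: problem P_2^i; d j plays the role of d_{ij} for j in the closed neighbourhood *)
definition P2_feasible :: "('v \<Rightarrow> 'v \<Rightarrow> bool) \<Rightarrow> 'v \<Rightarrow> ('v \<Rightarrow> real) \<Rightarrow> ('v \<Rightarrow> real) \<Rightarrow> bool" where
  "P2_feasible E i x d \<longleftrightarrow>
     d i + (\<Sum>j\<in>nbr E i. d j) = x i \<and> (\<forall>j\<in>cnbr E i. d j \<ge> 0)"

definition P2_obj :: "('v \<Rightarrow> 'v \<Rightarrow> bool) \<Rightarrow> ('v \<Rightarrow> real \<Rightarrow> real) \<Rightarrow> 'v \<Rightarrow> ('v \<Rightarrow> real) \<Rightarrow> ('v \<Rightarrow> real) \<Rightarrow> real" where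
  "P2_obj E p i x d = (\<Sum>j\<in>nbr E i. p j (x j + d j) - p j (x j)) + (p i (d i) - p i 0)"

definition P2_optimal :: "('v \<Rightarrow> 'v \<Rightarrow> bool) \<Rightarrow> ('v \<Rightarrow> real \<Rightarrow> real) \<Rightarrow> 'v \<Rightarrow> ('v \<Rightarrow> real) \<Rightarrow> ('v \<Rightarrow> real) \<Rightarrow> bool" where
  "P2_optimal E p i x d \<longleftrightarrow> P2_feasible E i x d \<and>
     (\<forall>d'. P2_feasible E i x d' \<longrightarrow> P2_obj E p i x d' \<le> P2_obj E p i x d)"

(* NRPM: problem P_3; d i j = d_{ij} (only entries on arcs and diagonal are used) *)
definition P3_feasible :: "('v \<Rightarrow> 'v \<Rightarrow> bool) \<Rightarrow> ('v \<Rightarrow> real) \<Rightarrow> ('v \<Rightarrow> real) \<Rightarrow> ('v \<Rightarrow> 'v \<Rightarrow> real) \<Rightarrow> bool" where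
  "P3_feasible E x z d \<longleftrightarrow>
     (\<forall>i. z i = x i + (\<Sum>j\<in>cnbr E i. d j i - d i j)) \<and>
     (\<forall>i. (\<Sum>j\<in>cnbr E i. d i j) = x i) \<and>
     (\<forall>i j. ((i, j) \<in> arcs E \<or> i = j) \<longrightarrow> d i j \<ge> 0)"

definition P3_optimal :: "('v::finite \<Rightarrow> 'v \<Rightarrow> bool) \<Rightarrow> ('v \<Rightarrow> real \<Rightarrow> real) \<Rightarrow> ('v \<Rightarrow> real) \<Rightarrow> ('v \<Rightarrow> real) \<Rightarrow> ('v \<Rightarrow> 'v \<Rightarrow> real) \<Rightarrow> bool" where
  "P3_optimal E p x z d \<longleftrightarrow> P3_feasible E x z d \<and>
     (\<forall>z' d'. P3_feasible E x z' d' \<longrightarrow> U p z' \<le> U p z)"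

end

theory Submission
  imports Defs
begin

text \<open>
  Everything rests on the tangent inequalities of the strictly concave payoffs: moving mass
  \<open>\<delta> > 0\<close> from node \<open>j\<close> to node \<open>i\<close> strictly increases \<open>p\<^sub>i + p\<^sub>j\<close> as soon as the marginal payoff
  of \<open>j\<close> before the move does not exceed that of \<open>i\<close> after it. Since marginal payoffs decrease,
  \<open>u\<^sub>i(\<theta>\<^sub>i) \<ge> u\<^sub>j(0)\<close> makes node \<open>i\<close> at least as valuable as \<open>j\<close>, so any positive flow along \<open>(i,j)\<close>
  could profitably be kept at \<open>i\<close>: for NBRD this contradicts optimality directly, for NRPM after
  shrinking the rerouted amount using continuity of the marginal payoffs, and for SSD the flow
  formula evaluates to \<open>0\<close>.
\<close>

lemma strictly_concave_on_tangent_le: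
  fixes f :: "real \<Rightarrow> real"
  assumes conc: "strictly_concave_on S f"
    and deriv: "(f has_real_derivative D) (at c within S)" and "c \<in> S" "y \<in> S"
  shows "f y \<le> f c + D * (y - c)"
proof (cases "y = c")
  case False
  let ?g = "\<lambda>t. c + t * (y - c)"
  have in_S: "?g t \<in> S" if "0 \<le> t" "t \<le> 1" for t
  proof -
    have "convex S" using conc by (simp add: strictly_concave_on_def)
    then have "(1 - t) *\<^sub>R c + t *\<^sub>R y \<in> S" using that \<open>c \<in> S\<close> \<open>y \<in> S\<close> by (intro convexD) auto
    then show ?thesis by (simp add: algebra_simps)
  qed
  have small: "\<forall>\<^sub>F t in at_right (0::real). 0 < t \<and> t < 1"
    unfolding eventually_at_right_field by (intro exI[of _ 1]) auto
  have "filterlim ?g (at c within S) (at_right 0)"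
    unfolding filterlim_at
  proof
    show "\<forall>\<^sub>F t in at_right 0. ?g t \<in> S \<and> ?g t \<noteq> c"
      using small by eventually_elim (use in_S False in auto)
    have "(?g \<longlongrightarrow> c + 0 * (y - c)) (at_right 0)" by (intro tendsto_intros)
    then show "(?g \<longlongrightarrow> c) (at_right 0)" by simp
  qed
  \<comment> \<open>chord slopes from \<open>c\<close> towards \<open>y\<close> dominate \<open>f y - f c\<close> and tend to \<open>D * (y - c)\<close>\<close>
  from filterlim_compose[OF deriv[unfolded has_field_derivative_iff] this]
  have "((\<lambda>t. (f (?g t) - f c) / (?g t - c) * (y - c)) \<longlongrightarrow> D * (y - c)) (at_right 0)"
    by (intro tendsto_intros) simp
  then have quotient: "((\<lambda>t. (f (?g t) - f c) / t) \<longlongrightarrow> D * (y - c)) (at_right 0)"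
    by (rule Lim_transform_eventually) (use small False in \<open>auto elim: eventually_mono\<close>)
  have "\<forall>\<^sub>F t in at_right 0. f y - f c \<le> (f (?g t) - f c) / t"
    using small
  proof eventually_elim
    case (elim t)
    have "?g t = (1 - t) * c + t * y" by (simp add: algebra_simps)
    then have "(1 - t) * f c + t * f y < f (?g t)"
      using conc False elim \<open>c \<in> S\<close> \<open>y \<in> S\<close> unfolding strictly_concave_on_def by auto
    then show ?case using elim by (simp add: field_simps)
  qed
  from tendsto_lowerbound[OF quotient this] show ?thesis by simp
qed simp

lemma strictly_concave_on_tangent_less:
  fixes f :: "real \<Rightarrow> real"
  assumes conc: "strictly_concave_on S f"
    and deriv: "(f has_real_derivative D) (at c within S)" and "c \<in> S" "y \<in> S" "y \<noteq> c"
  shows "f y < f c + D * (y - c)"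
proof -
  let ?m = "(1 - 1/2) * c + (1/2) * y"
  have "(1 - 1/2) * f c + (1/2) * f y < f ?m"
    using conc assms(3-5) unfolding strictly_concave_on_def
    by (elim conjE ballE[of _ _ c] ballE[of _ _ y]) (auto dest!: spec[of _ "1/2"])
  moreover have "?m \<in> S"
    using conc assms(3,4) convexD[of S c y "1 - 1/2" "1/2"]
    by (simp add: strictly_concave_on_def)
  then have "f ?m \<le> f c + D * (?m - c)"
    by (rule strictly_concave_on_tangent_le[OF conc deriv \<open>c \<in> S\<close>])
  ultimately show ?thesis by (simp add: algebra_simps)
qed

lemma payoff_tangent_le:
  assumes "payoff_ok p u" "0 \<le> c" "0 \<le> y"
  shows "p k y \<le> p k c + u k c * (y - c)"
  using assms strictly_concave_on_tangent_le unfolding payoff_ok_def by (metis atLeast_iff)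

lemma payoff_tangent_less:
  assumes "payoff_ok p u" "0 \<le> c" "0 \<le> y" "y \<noteq> c"
  shows "p k y < p k c + u k c * (y - c)"
  using assms strictly_concave_on_tangent_less unfolding payoff_ok_def by (metis atLeast_iff)

lemma payoff_marginal_less:
  assumes "payoff_ok p u" "0 \<le> a" "a < b"
  shows "u k b < u k a"
proof -
  have "p k b < p k a + u k a * (b - a)" "p k a < p k b + u k b * (a - b)"
    using payoff_tangent_less[OF assms(1)] assms by auto
  then have "0 < (u k a - u k b) * (b - a)" by (simp add: algebra_simps)
  then show ?thesis using assms by (simp add: zero_less_mult_iff)
qed

lemma payoff_marginal_le:
  assumes "payoff_ok p u" "0 \<le> a" "a \<le> b"
  shows "u k b \<le> u k a"
  using payoff_marginal_less[OF assms(1,2), of b k] assms(3) by (cases "a = b") auto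

lemma payoff_marginal_continuous:
  assumes "payoff_ok p u" "0 \<le> a"
  shows "continuous (at a within {0..}) (u k)"
  using assms DERIV_continuous unfolding payoff_ok_def by (metis atLeast_iff)

lemma payoff_marginal_near:
  assumes "payoff_ok p u" "0 \<le> a" "0 < e"
  obtains \<eta> where "0 < \<eta>" "\<And>y. 0 \<le> y \<Longrightarrow> \<bar>y - a\<bar> < \<eta> \<Longrightarrow> \<bar>u k y - u k a\<bar> < e"
  using payoff_marginal_continuous[OF assms(1,2), of k] assms(3)
  unfolding continuous_within_eps_delta dist_real_def by (metis atLeast_iff)

lemma payoff_transfer_gain:
  assumes "payoff_ok p u" "0 \<le> a" "0 \<le> b" "0 < \<delta>" "u j b \<le> u i (a + \<delta>)"
  shows "p j (b + \<delta>) - p j b < p i (a + \<delta>) - p i a"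
proof -
  have "p i a < p i (a + \<delta>) - u i (a + \<delta>) * \<delta>"
    using payoff_tangent_less[OF assms(1), of "a + \<delta>" a i] assms(2,4) by simp
  moreover have "p j (b + \<delta>) < p j b + u j b * \<delta>"
    using payoff_tangent_less[OF assms(1), of b "b + \<delta>" j] assms(3,4) by simp
  moreover have "u j b * \<delta> \<le> u i (a + \<delta>) * \<delta>"
    using assms(4,5) by simp
  ultimately show ?thesis by linarith
qed

lemma ssd_flow_eq_0:
  assumes pu: "payoff_ok p u" and "0 \<le> x i" and le: "u j (x j) \<le> u i (x i)"
  shows "ssd_flow p u i j x = 0"
proof (cases "u j (x j) \<ge> u i 0")
  case True
  then have "ssd_y u i j x = 0" by (simp add: ssd_y_def)
  moreover have "p i 0 \<le> p i (x i) - u i (x i) * x i"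
    using payoff_tangent_le[OF pu \<open>0 \<le> x i\<close>, of 0 i] by simp
  moreover have "u j (x j) * x i \<le> u i (x i) * x i"
    using le \<open>0 \<le> x i\<close> by (rule mult_right_mono)
  ultimately show ?thesis by (simp add: ssd_flow_def)
next
  case False
  then have "ssd_y u i j x = x i" using le by (simp add: ssd_y_def)
  then show ?thesis by (simp add: ssd_flow_def)
qed

lemma P2_feasible_retain:
  fixes E :: "'v::finite \<Rightarrow> 'v \<Rightarrow> bool"
  assumes feas: "P2_feasible E i x d" and j: "j \<in> nbr E i" and i: "i \<notin> nbr E i"
  shows "P2_feasible E i x (d(i := d i + d j, j := 0))"
proof -
  have "i \<noteq> j" using i j by auto
  have "(\<Sum>l\<in>nbr E i. (d(i := d i + d j, j := 0)) l) = (\<Sum>l\<in>nbr E i - {j}. d l)"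
    using i j by (simp add: sum.remove[OF finite j]) (rule sum.cong, auto)
  also have "\<dots> = (\<Sum>l\<in>nbr E i. d l) - d j"
    using j by (simp add: sum_diff1)
  finally have "(\<Sum>l\<in>nbr E i. (d(i := d i + d j, j := 0)) l) = (\<Sum>l\<in>nbr E i. d l) - d j" .
  moreover have "0 \<le> d j" using feas j by (simp add: P2_feasible_def cnbr_def)
  ultimately show ?thesis using feas \<open>i \<noteq> j\<close> unfolding P2_feasible_def cnbr_def by auto
qed

lemma P2_obj_retain:
  fixes E :: "'v::finite \<Rightarrow> 'v \<Rightarrow> bool"
  assumes j: "j \<in> nbr E i" and i: "i \<notin> nbr E i"
  shows "P2_obj E p i x (d(i := d i + d j, j := 0)) =
    P2_obj E p i x d + (p i (d i + d j) - p i (d i)) - (p j (x j + d j) - p j (x j))"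
proof -
  let ?d' = "d(i := d i + d j, j := 0)" and ?gain = "\<lambda>d l. p l (x l + d l) - p l (x l)"
  have "i \<noteq> j" using i j by auto
  have "(\<Sum>l\<in>nbr E i - {j}. ?gain ?d' l) = (\<Sum>l\<in>nbr E i - {j}. ?gain d l)"
    using i by (intro sum.cong) auto
  then show ?thesis
    using \<open>i \<noteq> j\<close> unfolding P2_obj_def sum.remove[OF finite j] by simp
qed

lemma P2_optimal_flow_eq_0:
  fixes E :: "'v::finite \<Rightarrow> 'v \<Rightarrow> bool"
  assumes pu: "payoff_ok p u" and "E i j" "\<not> E i i" and "0 \<le> x j"
    and le: "u j (x j) \<le> u i (x i)" and opt: "P2_optimal E p i x d"
  shows "d j = 0"
proof (rule ccontr)
  assume "d j \<noteq> 0"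
  have j: "j \<in> nbr E i" and i: "i \<notin> nbr E i" using \<open>E i j\<close> \<open>\<not> E i i\<close> by (auto simp: nbr_def)
  have feas: "P2_feasible E i x d" using opt by (simp add: P2_optimal_def)
  then have nonneg: "\<And>l. l \<in> cnbr E i \<Longrightarrow> 0 \<le> d l" by (simp add: P2_feasible_def)
  then have "0 < d j" "0 \<le> d i" using \<open>d j \<noteq> 0\<close> j by (force simp: cnbr_def)+
  have "d j \<le> (\<Sum>l\<in>nbr E i. d l)"
    using nonneg by (intro member_le_sum[OF j]) (auto simp: cnbr_def)
  then have "d i + d j \<le> x i" using feas by (simp add: P2_feasible_def)
  then have "u j (x j) \<le> u i (d i + d j)"
    using le payoff_marginal_le[OF pu, of "d i + d j" "x i" i] \<open>0 < d j\<close> \<open>0 \<le> d i\<close> by simp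
  then have "p j (x j + d j) - p j (x j) < p i (d i + d j) - p i (d i)"
    using payoff_transfer_gain[OF pu \<open>0 \<le> d i\<close> \<open>0 \<le> x j\<close> \<open>0 < d j\<close>] by blast
  then have "P2_obj E p i x d < P2_obj E p i x (d(i := d i + d j, j := 0))"
    using P2_obj_retain[OF j i] by simp
  moreover have "P2_obj E p i x (d(i := d i + d j, j := 0)) \<le> P2_obj E p i x d"
    using opt P2_feasible_retain[OF feas j i] by (simp add: P2_optimal_def)
  ultimately show False by simp
qed

text \<open>Node \<open>i\<close> keeps \<open>\<epsilon>\<close> of the mass it sends along \<open>(i,j)\<close>; \<open>d i i\<close> is the mass staying at \<open>i\<close>.\<close>

definition retain_flow :: "('v \<Rightarrow> 'v \<Rightarrow> real) \<Rightarrow> 'v \<Rightarrow> 'v \<Rightarrow> real \<Rightarrow> 'v \<Rightarrow> 'v \<Rightarrow> real" where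
  "retain_flow d i j \<epsilon> a b =
     d a b + (if a = i \<and> b = i then \<epsilon> else 0) - (if a = i \<and> b = j then \<epsilon> else 0)"

lemma sum_retain_flow_out:
  assumes "finite A"
  shows "(\<Sum>l\<in>A. retain_flow d i j \<epsilon> k l) =
    (\<Sum>l\<in>A. d k l) + (if k = i \<and> i \<in> A then \<epsilon> else 0) - (if k = i \<and> j \<in> A then \<epsilon> else 0)"
  using assms by (cases "k = i") (simp_all add: retain_flow_def sum.distrib sum_subtractf)

lemma sum_retain_flow_in:
  assumes "finite A"
  shows "(\<Sum>l\<in>A. retain_flow d i j \<epsilon> l k) =
    (\<Sum>l\<in>A. d l k) + (if k = i \<and> i \<in> A then \<epsilon> else 0) - (if k = j \<and> i \<in> A then \<epsilon> else 0)"
  using assms by (cases "k = i"; cases "k = j") (simp_all add: retain_flow_def sum.distrib sum_subtractf)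

lemma P3_feasible_retain_flow:
  fixes E :: "'v::finite \<Rightarrow> 'v \<Rightarrow> bool"
  assumes feas: "P3_feasible E x z d" and "E i j" "E j i" "i \<noteq> j" "0 \<le> \<epsilon>" "\<epsilon> \<le> d i j"
  shows "P3_feasible E x (z(i := z i + \<epsilon>, j := z j - \<epsilon>)) (retain_flow d i j \<epsilon>)"
proof -
  have "i \<in> cnbr E i" "j \<in> cnbr E i" "i \<in> cnbr E j"
    using assms(2,3) by (auto simp: cnbr_def nbr_def)
  then show ?thesis
    using feas assms(4-6)
    by (auto simp: P3_feasible_def sum_subtractf sum_retain_flow_in sum_retain_flow_out)
       (auto simp: retain_flow_def)
qed

lemma P3_feasible_inflow:
  fixes E :: "'v::finite \<Rightarrow> 'v \<Rightarrow> bool"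
  assumes "P3_feasible E x z d"
  shows "z k = (\<Sum>l\<in>cnbr E k. d l k)"
  using assms by (simp add: P3_feasible_def sum_subtractf)

lemma P3_feasible_flow_le:
  fixes E :: "'v::finite \<Rightarrow> 'v \<Rightarrow> bool"
  assumes "symp E" "P3_feasible E x z d" "l \<in> cnbr E k"
  shows "0 \<le> d l k" "d l k \<le> z k"
proof -
  have nonneg: "0 \<le> d m k" if "m \<in> cnbr E k" for m
    using assms(1,2) that by (auto simp: P3_feasible_def cnbr_def nbr_def arcs_def dest: sympD)
  then show "0 \<le> d l k" using assms(3) .
  show "d l k \<le> z k"
    unfolding P3_feasible_inflow[OF assms(2)] using nonneg assms(3) by (intro member_le_sum) auto
qed

lemma U_fun_upd:
  fixes z :: "'v::finite \<Rightarrow> real"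
  shows "U p (z(i := a)) = U p z + (p i a - p i (z i))"
  unfolding U_def by (simp add: sum.remove[of UNIV i] cong: sum.cong) (simp add: algebra_simps)

lemma P3_optimal_flow_pos_imp_marginal_le:
  fixes E :: "'v::finite \<Rightarrow> 'v \<Rightarrow> bool"
  assumes pu: "payoff_ok p u" and E: "symp E" "E i j" "i \<noteq> j"
    and opt: "P3_optimal E p x z d" and pos: "0 < d i j"
  shows "u i (z i) \<le> u j (z j)"
proof (rule ccontr)
  define g where "g = (u i (z i) - u j (z j)) / 2"
  assume "\<not> ?thesis"
  then have "0 < g" by (simp add: g_def)
  have feas: "P3_feasible E x z d" using opt by (simp add: P3_optimal_def)
  have "i \<in> cnbr E i" "i \<in> cnbr E j" "j \<in> cnbr E j"
    using E by (auto simp: cnbr_def nbr_def dest: sympD)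
  then have "0 \<le> z i" "d i j \<le> z j" "0 \<le> z j"
    using P3_feasible_flow_le[OF \<open>symp E\<close> feas] by (force+)
  obtain \<eta>\<^sub>i where "0 < \<eta>\<^sub>i" and near_i: "\<And>y. 0 \<le> y \<Longrightarrow> \<bar>y - z i\<bar> < \<eta>\<^sub>i \<Longrightarrow> \<bar>u i y - u i (z i)\<bar> < g"
    using payoff_marginal_near[OF pu \<open>0 \<le> z i\<close> \<open>0 < g\<close>] by blast
  obtain \<eta>\<^sub>j where "0 < \<eta>\<^sub>j" and near_j: "\<And>y. 0 \<le> y \<Longrightarrow> \<bar>y - z j\<bar> < \<eta>\<^sub>j \<Longrightarrow> \<bar>u j y - u j (z j)\<bar> < g"
    using payoff_marginal_near[OF pu \<open>0 \<le> z j\<close> \<open>0 < g\<close>] by blast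
  define \<epsilon> where "\<epsilon> = min (d i j) (min \<eta>\<^sub>i \<eta>\<^sub>j / 2)"
  have "0 < \<epsilon>" "\<epsilon> \<le> d i j" "\<epsilon> < \<eta>\<^sub>i" "\<epsilon> < \<eta>\<^sub>j"
    using pos \<open>0 < \<eta>\<^sub>i\<close> \<open>0 < \<eta>\<^sub>j\<close> by (auto simp: \<epsilon>_def)
  have "\<bar>u i (z i + \<epsilon>) - u i (z i)\<bar> < g"
    by (rule near_i) (use \<open>0 \<le> z i\<close> \<open>0 < \<epsilon>\<close> \<open>\<epsilon> < \<eta>\<^sub>i\<close> in auto)
  moreover have "\<bar>u j (z j - \<epsilon>) - u j (z j)\<bar> < g"
    by (rule near_j) (use \<open>\<epsilon> \<le> d i j\<close> \<open>d i j \<le> z j\<close> \<open>0 < \<epsilon>\<close> \<open>\<epsilon> < \<eta>\<^sub>j\<close> in auto)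
  moreover have "2 * g = u i (z i) - u j (z j)" by (simp add: g_def)
  ultimately have "u j (z j - \<epsilon>) \<le> u i (z i + \<epsilon>)"
    unfolding abs_less_iff by linarith
  then have "p j (z j) - p j (z j - \<epsilon>) < p i (z i + \<epsilon>) - p i (z i)"
    using payoff_transfer_gain[OF pu \<open>0 \<le> z i\<close>, of "z j - \<epsilon>" \<epsilon> j]
      \<open>0 < \<epsilon>\<close> \<open>\<epsilon> \<le> d i j\<close> \<open>d i j \<le> z j\<close> by simp
  then have "U p z < U p (z(i := z i + \<epsilon>, j := z j - \<epsilon>))"
    using \<open>i \<noteq> j\<close> by (simp add: U_fun_upd)
  moreover have "P3_feasible E x (z(i := z i + \<epsilon>, j := z j - \<epsilon>)) (retain_flow d i j \<epsilon>)"
    using E \<open>0 < \<epsilon>\<close> \<open>\<epsilon> \<le> d i j\<close> by (intro P3_feasible_retain_flow[OF feas]) (auto dest: sympD)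
  ultimately show False using opt unfolding P3_optimal_def by fastforce
qed

lemma P3_optimal_flow_eq_0:
  fixes E :: "'v::finite \<Rightarrow> 'v \<Rightarrow> bool"
  assumes pu: "payoff_ok p u" and E: "symp E" "E i j" "i \<noteq> j"
    and opt: "P3_optimal E p x z d" and le: "u j 0 \<le> u i (z i)"
  shows "d i j = 0"
proof (rule ccontr)
  assume "d i j \<noteq> 0"
  have feas: "P3_feasible E x z d" using opt by (simp add: P3_optimal_def)
  have "i \<in> cnbr E j" using E by (auto simp: cnbr_def nbr_def dest: sympD)
  then have "0 \<le> d i j" "d i j \<le> z j" using P3_feasible_flow_le[OF \<open>symp E\<close> feas] by auto
  then have "0 < d i j" "0 < z j" using \<open>d i j \<noteq> 0\<close> by auto
  then have "u i (z i) \<le> u j (z j)"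
    using P3_optimal_flow_pos_imp_marginal_le[OF pu E opt] by blast
  moreover have "u j (z j) < u j 0" using payoff_marginal_less[OF pu order_refl \<open>0 < z j\<close>] .
  ultimately show False using le by simp
qed

theorem mainTheorem5:
  fixes E :: "'v::finite \<Rightarrow> 'v \<Rightarrow> bool"
    and p u :: "'v \<Rightarrow> real \<Rightarrow> real"
    and \<theta> x :: "'v \<Rightarrow> real" and \<rho> :: real and i j :: 'v
  assumes "graph_ok E"
    and "payoff_ok p u"
    and "\<rho> \<ge> 0"
    and "\<forall>k. \<theta> k \<ge> 0"
    and "x \<in> S_rho \<rho>"
    and "(i, j) \<in> arcs E"
    and "u i (\<theta> i) \<ge> u j 0"
    and "0 \<le> x i" and "x i \<le> \<theta> i"
  shows "ssd_flow p u i j x = 0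
       \<and> (\<forall>d. P2_optimal E p i x d \<longrightarrow> d j = 0)
       \<and> (\<forall>z d. P3_optimal E p x z d \<and> 0 \<le> z i \<and> z i \<le> \<theta> i \<longrightarrow> d i j = 0)"
proof -
  note pu = \<open>payoff_ok p u\<close>
  have "E i j" "symp E" "\<not> E i i" "i \<noteq> j"
    using \<open>(i, j) \<in> arcs E\<close> \<open>graph_ok E\<close> by (auto simp: arcs_def graph_ok_def symp_def)
  have "0 \<le> x j" using \<open>x \<in> S_rho \<rho>\<close> by (simp add: S_rho_def)
  have below_i: "u j 0 \<le> u i y" if "0 \<le> y" "y \<le> \<theta> i" for y
    using payoff_marginal_le[OF pu that, of i] \<open>u i (\<theta> i) \<ge> u j 0\<close> by linarith
  have "u j (x j) \<le> u i (x i)"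
    using payoff_marginal_le[OF pu order_refl \<open>0 \<le> x j\<close>] below_i \<open>0 \<le> x i\<close> \<open>x i \<le> \<theta> i\<close>
    by (meson order_trans)
  show ?thesis
  proof (intro conjI allI impI)
    show "ssd_flow p u i j x = 0"
      using ssd_flow_eq_0 pu \<open>0 \<le> x i\<close> \<open>u j (x j) \<le> u i (x i)\<close> .
  next
    fix d assume "P2_optimal E p i x d"
    with P2_optimal_flow_eq_0 pu \<open>E i j\<close> \<open>\<not> E i i\<close> \<open>0 \<le> x j\<close> \<open>u j (x j) \<le> u i (x i)\<close>
    show "d j = 0" .
  next
    fix z d assume "P3_optimal E p x z d \<and> 0 \<le> z i \<and> z i \<le> \<theta> i"
    then show "d i j = 0"
      using P3_optimal_flow_eq_0[OF pu \<open>symp E\<close> \<open>E i j\<close> \<open>i \<noteq> j\<close>] below_i by blast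
  qed
qed

end
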